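(* For $j\in\mathbb{Z}$ let $R_j(t,u)$ be the generating function of labelled plane trees, where $t$ counts edges and $u$ counts nodes with label at least $j$. The family $R_0,R_1,R_2,\dots$ is completely determined by the equations $$R_j=1+tR_j(R_{j-1}+R_{j+1})\quad(j\ge1),\qquad R_0(t,u)=uR_1(tu,1/u).$$ More generally, for all $j\in\mathbb{Z}$, $R_{-j}(t,u)=uR_{j+1}(tu,1/u)$.
   Context: A labelled plane tree is a rooted plane tree whose nodes carry integer labels, with the root labelled $0$ and labels of adjacent nodes differing by $+1$ or $-1$. Generating functions are formal power series in $t$ with coefficients polynomial in $u$. *)

theory Defs
  imports "HOL-Computational_Algebra.Polynomial" "HOL-Computational_Algebra.Formal_Power_Series"
begin

datatype ltree = Node int "ltree list"

fun root_label :: "ltree \<Rightarrow> int" where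
  "root_label (Node a ts) = a"

fun labels :: "ltree \<Rightarrow> int list" where
  "labels (Node a ts) = a # concat (map labels ts)"

fun adj_ok :: "ltree \<Rightarrow> bool" where
  "adj_ok (Node a ts) = (\<forall>t\<in>set ts. \<bar>root_label t - a\<bar> = 1 \<and> adj_ok t)"

definition lpt :: "ltree \<Rightarrow> bool" where
  "lpt T \<longleftrightarrow> root_label T = 0 \<and> adj_ok T"

definition num_edges :: "ltree \<Rightarrow> nat" where
  "num_edges T = length (labels T) - 1"

definition num_ge :: "int \<Rightarrow> ltree \<Rightarrow> nat" where
  "num_ge j T = length (filter (\<lambda>l. j \<le> l) (labels T))"

text \<open>R j (t,u): t counts edges, u counts nodes with label at least j;
  a formal power series in t with coefficients in Z[u].\<close>
definition R :: "int \<Rightarrow> int poly fps" where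
  "R j = Abs_fps (\<lambda>n. \<Sum>T\<in>{T. lpt T \<and> num_edges T = n}. monom 1 (num_ge j T))"

text \<open>dual_rel G F expresses the identity G(t,u) = u * F(t u, 1/u).
  Writing F = sum_n F_n(u) t^n, one has u F(tu,1/u) = sum_n u^(n+1) F_n(1/u) t^n,
  a Laurent polynomial in u for each n; it equals the polynomial G_n iff
  deg F_n <= n+1 and coeff G_n k = coeff F_n (n+1-k) for k <= n+1 (and 0 otherwise).\<close>
definition dual_rel :: "int poly fps \<Rightarrow> int poly fps \<Rightarrow> bool" where
  "dual_rel G F \<longleftrightarrow>
     (\<forall>n. degree (fps_nth F n) \<le> n + 1) \<and>
     (\<forall>n k. coeff (fps_nth G n) k = (if k \<le> n + 1 then coeff (fps_nth F n) (n + 1 - k) else 0))"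

end

theory Submission
  imports Defs
begin

(* Removing the leftmost subtree of the root splits a labelled plane tree with n + 1 edges
   into a labelled plane tree with the remaining edges and a subtree whose root is labelled
   \<sigma> = 1 or \<sigma> = -1; shifting the labels of that subtree by -\<sigma> makes it a labelled plane tree,
   in which the labels \<ge> j become the labels \<ge> j - \<sigma>.  This gives, for every integer j,
   R j = [j \<le> 0] u + t R j (R (j - 1) + R (j + 1)).
   Negating all labels is an involution of the labelled plane trees with n edges under which
   the nodes labelled \<ge> j + 1 correspond to the nodes labelled < -j, i.e. to the complement
   of the nodes labelled \<ge> -j.  So t^n u^k has the same coefficient in R (-j) as t^n u^(n+1-k)
   in R (j + 1), which is the identity R (-j) (t, u) = u R (j + 1) (t u, 1/u).
   Uniqueness is an induction on n: for j \<ge> 1 the recursion determines the coefficient of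
   t^n in S j from lower coefficients, and the duality then determines that of S 0 from that
   of S 1. *)

fun shift :: "int \<Rightarrow> ltree \<Rightarrow> ltree" where
  "shift d (Node a ts) = Node (a + d) (map (shift d) ts)"

fun negate :: "ltree \<Rightarrow> ltree" where
  "negate (Node a ts) = Node (- a) (map negate ts)"

fun graft :: "ltree \<Rightarrow> ltree \<Rightarrow> ltree" where
  "graft s (Node a ts) = Node a (s # ts)"

(* Meaningful only for trees with at least one edge: hd [] is unspecified. *)
fun first_subtree :: "ltree \<Rightarrow> ltree" where
  "first_subtree (Node a ts) = hd ts"

fun prune :: "ltree \<Rightarrow> ltree" where
  "prune (Node a ts) = Node a (tl ts)"

lemma labels_shift: "labels (shift d T) = map (\<lambda>l. l + d) (labels T)"
  by (induction T) (auto simp: map_concat comp_def cong: map_cong)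

lemma root_label_shift [simp]: "root_label (shift d T) = root_label T + d"
  by (cases T) simp

lemma adj_ok_shift [simp]: "adj_ok (shift d T) = adj_ok T"
  by (induction T) auto

lemma shift_shift [simp]: "shift a (shift b T) = shift (b + a) T"
  by (induction T) (auto simp: algebra_simps)

lemma shift_0 [simp]: "shift 0 T = T"
  by (induction T) (auto simp: map_idI)

lemma num_ge_shift: "num_ge j (shift d T) = num_ge (j - d) T"
proof -
  have "(\<lambda>l. j \<le> l + d) = (\<lambda>l. j - d \<le> l)" by auto
  then show ?thesis by (simp add: num_ge_def labels_shift filter_map comp_def)
qed

lemma num_edges_shift [simp]: "num_edges (shift d T) = num_edges T"
  by (simp add: num_edges_def labels_shift)

lemma labels_negate: "labels (negate T) = map uminus (labels T)"
  by (induction T) (auto simp: map_concat comp_def cong: map_cong)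

lemma root_label_negate [simp]: "root_label (negate T) = - root_label T"
  by (cases T) simp

lemma adj_ok_negate [simp]: "adj_ok (negate T) = adj_ok T"
  by (induction T) auto

lemma negate_negate [simp]: "negate (negate T) = T"
  by (induction T) (auto simp: map_idI)

lemma lpt_negate [simp]: "lpt (negate T) = lpt T"
  by (simp add: lpt_def)

lemma num_edges_negate [simp]: "num_edges (negate T) = num_edges T"
  by (simp add: num_edges_def labels_negate)

lemma labels_ne_Nil [simp]: "labels T \<noteq> []"
  by (cases T) simp

lemma length_labels: "length (labels T) = num_edges T + 1"
  by (simp add: num_edges_def)

lemma num_ge_le_length_labels: "num_ge j T \<le> length (labels T)"
  by (simp add: num_ge_def)

lemma num_ge_negate: "num_ge (- j) T + num_ge (j + 1) (negate T) = length (labels T)"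
proof -
  have "(\<lambda>l. j + 1 \<le> l) \<circ> uminus = (\<lambda>l. \<not> - j \<le> l)" by auto
  then have "num_ge (j + 1) (negate T) = length (filter (\<lambda>l. \<not> - j \<le> l) (labels T))"
    by (simp add: num_ge_def labels_negate filter_map)
  then show ?thesis
    using sum_length_filter_compl[of "\<lambda>l. - j \<le> l" "labels T"] by (simp add: num_ge_def)
qed

lemma first_subtree_graft [simp]: "first_subtree (graft s T) = s"
  by (cases T) simp

lemma prune_graft [simp]: "prune (graft s T) = T"
  by (cases T) simp

lemma graft_first_subtree_prune:
  "num_edges T \<noteq> 0 \<Longrightarrow> graft (first_subtree T) (prune T) = T"
  by (cases T rule: labels.cases) (auto simp: num_edges_def neq_Nil_conv)

lemma num_edges_graft: "num_edges (graft s T) = num_edges s + num_edges T + 1"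
  by (cases T) (simp add: num_edges_def)

lemma num_ge_graft: "num_ge j (graft s T) = num_ge j s + num_ge j T"
  by (cases T) (simp add: num_ge_def)

lemma root_label_graft [simp]: "root_label (graft s T) = root_label T"
  by (cases T) simp

lemma adj_ok_graft [simp]:
  "adj_ok (graft s T) \<longleftrightarrow> \<bar>root_label s - root_label T\<bar> = 1 \<and> adj_ok s \<and> adj_ok T"
  by (cases T) simp

lemma length_labels_subtree:
  "t \<in> set ts \<Longrightarrow> length (labels t) < length (labels (Node a ts))"
  by (induction ts) auto

lemma length_subtrees: "length ts < length (labels (Node a ts))"
  by (induction ts) (auto simp: Suc_le_eq length_labels)

lemma finite_adj_ok_trees:
  "finite {T. adj_ok T \<and> \<bar>root_label T\<bar> \<le> c \<and> length (labels T) \<le> N}"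
proof (induction N arbitrary: c)
  case 0
  then show ?case by (simp add: length_labels)
next
  case (Suc N)
  define M where "M = {T. adj_ok T \<and> \<bar>root_label T\<bar> \<le> c + 1 \<and> length (labels T) \<le> N}"
  define L where "L = {ts. set ts \<subseteq> M \<and> length ts \<le> N}"
  have "finite L"
    unfolding L_def M_def by (intro finite_lists_length_le Suc.IH)
  have "{T. adj_ok T \<and> \<bar>root_label T\<bar> \<le> c \<and> length (labels T) \<le> Suc N}
      \<subseteq> (\<lambda>(a, ts). Node a ts) ` ({-c..c} \<times> L)"
  proof
    fix T assume T: "T \<in> {T. adj_ok T \<and> \<bar>root_label T\<bar> \<le> c \<and> length (labels T) \<le> Suc N}"
    obtain a ts where T_def: "T = Node a ts" by (cases T)
    have "set ts \<subseteq> M"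
      using T length_labels_subtree[of _ ts a] by (fastforce simp: M_def T_def)
    moreover have "length ts \<le> N" using T length_subtrees[of ts a] by (simp add: T_def)
    ultimately show "T \<in> (\<lambda>(a, ts). Node a ts) ` ({-c..c} \<times> L)"
      using T by (force simp: L_def T_def)
  qed
  then show ?case by (rule finite_subset) (simp add: \<open>finite L\<close>)
qed

definition lpts :: "nat \<Rightarrow> ltree set" where
  "lpts n = {T. lpt T \<and> num_edges T = n}"

lemma finite_lpts: "finite (lpts n)"
proof (rule finite_subset[OF _ finite_adj_ok_trees])
  show "lpts n \<subseteq> {T. adj_ok T \<and> \<bar>root_label T\<bar> \<le> 0 \<and> length (labels T) \<le> n + 1}"
    by (auto simp: lpts_def lpt_def length_labels)
qed

lemma lpts_0: "lpts 0 = {Node 0 []}"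
  by (auto simp: lpts_def lpt_def num_edges_def elim!: root_label.elims)

lemma fps_nth_R: "fps_nth (R j) n = (\<Sum>T\<in>lpts n. monom 1 (num_ge j T))"
  by (simp add: R_def lpts_def)

lemma coeff_fps_nth_R: "coeff (fps_nth (R j) n) k = (\<Sum>T\<in>lpts n. if num_ge j T = k then 1 else 0)"
  by (simp add: fps_nth_R coeff_sum coeff_monom)

lemma num_ge_le_lpts: "T \<in> lpts n \<Longrightarrow> num_ge j T \<le> n + 1"
  using num_ge_le_length_labels[of j T] by (simp add: lpts_def length_labels)

lemma coeff_fps_nth_R_eq_0: "n + 1 < k \<Longrightarrow> coeff (fps_nth (R j) n) k = 0"
  using num_ge_le_lpts[of _ n j] by (force simp: coeff_fps_nth_R intro: sum.neutral)

lemma sum_lpts_negate: "(\<Sum>T\<in>lpts n. f (negate T)) = (\<Sum>T\<in>lpts n. f T)"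
  by (rule sum.reindex_bij_witness[where i = negate and j = negate]) (auto simp: lpts_def)

lemma dual_rel_R: "dual_rel (R (- j)) (R (j + 1))"
  unfolding dual_rel_def
proof (intro conjI allI)
  fix n
  show "degree (fps_nth (R (j + 1)) n) \<le> n + 1"
    by (intro degree_le allI impI coeff_fps_nth_R_eq_0)
next
  fix n k
  show "coeff (fps_nth (R (- j)) n) k
      = (if k \<le> n + 1 then coeff (fps_nth (R (j + 1)) n) (n + 1 - k) else 0)"
  proof (cases "k \<le> n + 1")
    case True
    have "num_ge (j + 1) (negate T) = n + 1 - k \<longleftrightarrow> num_ge (- j) T = k" if "T \<in> lpts n" for T
      using num_ge_negate[of j T] that True by (auto simp: lpts_def length_labels)
    then have "coeff (fps_nth (R (- j)) n) k
        = (\<Sum>T\<in>lpts n. if num_ge (j + 1) (negate T) = n + 1 - k then 1 else 0)"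
      unfolding coeff_fps_nth_R by (intro sum.cong) auto
    also have "\<dots> = coeff (fps_nth (R (j + 1)) n) (n + 1 - k)"
      unfolding coeff_fps_nth_R by (rule sum_lpts_negate)
    finally show ?thesis using True by simp
  qed (simp add: coeff_fps_nth_R_eq_0)
qed

lemma fps_mult_nth_Sigma:
  fixes F G :: "'a::comm_semiring_1 fps"
  assumes "\<And>k. finite (A k)" "\<And>k. finite (B k)"
    and "\<And>k. fps_nth F k = (\<Sum>x\<in>A k. f x)" "\<And>k. fps_nth G k = (\<Sum>y\<in>B k. g y)"
  shows "fps_nth (F * G) n = (\<Sum>(i, x, y) \<in> Sigma {0..n} (\<lambda>i. A i \<times> B (n - i)). f x * g y)"
proof -
  have "fps_nth (F * G) n = (\<Sum>i=0..n. \<Sum>(x, y) \<in> A i \<times> B (n - i). f x * g y)"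
    by (simp add: fps_mult_nth assms(3,4) sum_product sum.cartesian_product)
  also have "\<dots> = (\<Sum>(i, x, y) \<in> Sigma {0..n} (\<lambda>i. A i \<times> B (n - i)). f x * g y)"
    by (subst sum.Sigma) (auto simp: assms(1,2) split_def)
  finally show ?thesis .
qed

lemma sum_lpts_Suc_graft:
  assumes "\<bar>\<sigma>\<bar> = 1"
  shows "(\<Sum>(i, T, s) \<in> Sigma {0..n} (\<lambda>i. lpts i \<times> lpts (n - i)). h (graft (shift \<sigma> s) T))
       = (\<Sum>T \<in> {T \<in> lpts (Suc n). root_label (first_subtree T) = \<sigma>}. h T)"
proof (rule sum.reindex_bij_witness[where j = "\<lambda>(i, T, s). graft (shift \<sigma> s) T"
      and i = "\<lambda>T. (num_edges (prune T), prune T, shift (- \<sigma>) (first_subtree T))"])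
  fix T assume "T \<in> {T \<in> lpts (Suc n). root_label (first_subtree T) = \<sigma>}"
  then have T: "lpt T" "num_edges T = Suc n" "root_label (first_subtree T) = \<sigma>"
    by (auto simp: lpts_def)
  then have T_graft: "T = graft (first_subtree T) (prune T)"
    by (simp add: graft_first_subtree_prune)
  show "(\<lambda>(i, T, s). graft (shift \<sigma> s) T)
      (num_edges (prune T), prune T, shift (- \<sigma>) (first_subtree T)) = T"
    using T_graft by simp
  have "lpt (prune T)" "adj_ok (first_subtree T)"
    using T(1) T_graft by (metis adj_ok_graft lpt_def root_label_graft)+
  moreover have "num_edges (first_subtree T) + num_edges (prune T) = n"
    using T(2) num_edges_graft[of "first_subtree T" "prune T"] T_graft by simp
  ultimately show "(num_edges (prune T), prune T, shift (- \<sigma>) (first_subtree T))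
      \<in> Sigma {0..n} (\<lambda>i. lpts i \<times> lpts (n - i))"
    using T(3) by (auto simp: lpts_def lpt_def)
qed (use assms in \<open>auto simp: lpts_def lpt_def num_edges_graft\<close>)

lemma root_label_first_subtree:
  assumes "lpt T" "num_edges T \<noteq> 0"
  shows "\<bar>root_label (first_subtree T)\<bar> = 1"
  using assms graft_first_subtree_prune[OF assms(2)] by (metis adj_ok_graft diff_0_right lpt_def root_label_graft)

lemma fps_nth_R_mult_R:
  assumes "\<bar>\<sigma>\<bar> = 1"
  shows "fps_nth (R j * R (j - \<sigma>)) n
       = (\<Sum>T \<in> {T \<in> lpts (Suc n). root_label (first_subtree T) = \<sigma>}. monom 1 (num_ge j T))"
proof -
  have "fps_nth (R j * R (j - \<sigma>)) n
      = (\<Sum>(i, T, s) \<in> Sigma {0..n} (\<lambda>i. lpts i \<times> lpts (n - i)).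
           monom 1 (num_ge j T) * monom 1 (num_ge (j - \<sigma>) s))"
    by (rule fps_mult_nth_Sigma) (simp_all add: finite_lpts fps_nth_R)
  also have "\<dots> = (\<Sum>(i, T, s) \<in> Sigma {0..n} (\<lambda>i. lpts i \<times> lpts (n - i)).
      monom 1 (num_ge j (graft (shift \<sigma> s) T)))"
    by (simp add: mult_monom num_ge_graft num_ge_shift add.commute split_def)
  also have "\<dots> = (\<Sum>T \<in> {T \<in> lpts (Suc n). root_label (first_subtree T) = \<sigma>}. monom 1 (num_ge j T))"
    using assms by (rule sum_lpts_Suc_graft)
  finally show ?thesis .
qed

lemma R_rec:
  "R j = fps_const (if j \<le> 0 then [:0, 1:] else 1) + fps_X * R j * (R (j - 1) + R (j + 1))"
  (is "_ = ?rhs")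
proof (rule fps_ext)
  fix n
  show "fps_nth (R j) n = fps_nth ?rhs n"
  proof (cases n)
    case 0
    then show ?thesis by (simp add: fps_nth_R lpts_0 num_ge_def monom_Suc)
  next
    case (Suc m)
    let ?first = "\<lambda>\<sigma>. {T \<in> lpts (Suc m). root_label (first_subtree T) = \<sigma>}"
    have "lpts (Suc m) = ?first 1 \<union> ?first (- 1)"
      using root_label_first_subtree by (fastforce simp: lpts_def abs_eq_iff)
    then have "fps_nth (R j) n = (\<Sum>T\<in>?first 1 \<union> ?first (- 1). monom 1 (num_ge j T))"
      unfolding fps_nth_R Suc by (rule sum.cong) simp
    also have "\<dots> = (\<Sum>T\<in>?first 1. monom 1 (num_ge j T)) + (\<Sum>T\<in>?first (- 1). monom 1 (num_ge j T))"
      by (rule sum.union_disjoint) (auto simp: finite_lpts)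
    also have "\<dots> = fps_nth (R j * R (j - 1)) m + fps_nth (R j * R (j + 1)) m"
      using fps_nth_R_mult_R[of 1 j m] fps_nth_R_mult_R[of "- 1" j m] by simp
    finally show ?thesis
      using Suc by (simp add: mult.assoc distrib_left)
  qed
qed

lemma fps_nth_eq_by_recursion:
  fixes F G H F' G' H' :: "'a::comm_semiring_1 fps"
  assumes "F = 1 + fps_X * G * H" "F' = 1 + fps_X * G' * H'"
    and "\<And>i. i < n \<Longrightarrow> fps_nth G i = fps_nth G' i"
    and "\<And>i. i < n \<Longrightarrow> fps_nth H i = fps_nth H' i"
  shows "fps_nth F n = fps_nth F' n"
proof (cases n)
  case (Suc m)
  have "fps_nth (G * H) m = fps_nth (G' * H') m"
    unfolding fps_mult_nth using Suc assms(3,4) by (intro sum.cong) auto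
  with Suc show ?thesis by (simp add: assms(1,2) mult.assoc)
qed (simp add: assms(1,2))

lemma dual_rel_nth_eq:
  assumes "dual_rel G F" "dual_rel G' F'" "fps_nth F n = fps_nth F' n"
  shows "fps_nth G n = fps_nth G' n"
  using assms by (intro poly_eqI) (simp add: dual_rel_def)

lemma dual_rel_system_unique:
  fixes S S' :: "nat \<Rightarrow> int poly fps"
  assumes rec: "\<And>j. j \<ge> 1 \<Longrightarrow> S j = 1 + fps_X * S j * (S (j - 1) + S (j + 1))"
    and rec': "\<And>j. j \<ge> 1 \<Longrightarrow> S' j = 1 + fps_X * S' j * (S' (j - 1) + S' (j + 1))"
    and dual: "dual_rel (S 0) (S 1)" and dual': "dual_rel (S' 0) (S' 1)"
  shows "S = S'"
proof -
  have "\<forall>j. fps_nth (S j) n = fps_nth (S' j) n" for n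
  proof (induction n rule: less_induct)
    case (less n)
    have pos: "fps_nth (S j) n = fps_nth (S' j) n" if "j \<ge> 1" for j
      using rec[OF that] rec'[OF that] by (rule fps_nth_eq_by_recursion) (simp_all add: less.IH)
    show ?case
    proof
      fix j
      show "fps_nth (S j) n = fps_nth (S' j) n"
        using pos dual_rel_nth_eq[OF dual dual' pos[of 1]] by (cases j) simp_all
    qed
  qed
  then show ?thesis by (auto intro: fps_ext)
qed

theorem lemma6:
  shows "(\<forall>j::int. j \<ge> 1 \<longrightarrow> R j = 1 + fps_X * R j * (R (j - 1) + R (j + 1)))
       \<and> dual_rel (R 0) (R 1)
       \<and> (\<forall>S :: nat \<Rightarrow> int poly fps.
            ((\<forall>j::nat. j \<ge> 1 \<longrightarrow> S j = 1 + fps_X * S j * (S (j - 1) + S (j + 1)))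
             \<and> dual_rel (S 0) (S 1))
            \<longrightarrow> (\<forall>j::nat. S j = R (int j)))
       \<and> (\<forall>j::int. dual_rel (R (- j)) (R (j + 1)))"
proof (intro conjI allI impI)
  show rec: "R j = 1 + fps_X * R j * (R (j - 1) + R (j + 1))" if "j \<ge> 1" for j
    using R_rec[of j] that by simp
  show dual: "dual_rel (R 0) (R 1)"
    using dual_rel_R[of 0] by simp
  show "dual_rel (R (- j)) (R (j + 1))" for j
    by (rule dual_rel_R)
  fix S :: "nat \<Rightarrow> int poly fps" and j :: nat
  assume "(\<forall>j::nat. j \<ge> 1 \<longrightarrow> S j = 1 + fps_X * S j * (S (j - 1) + S (j + 1)))
    \<and> dual_rel (S 0) (S 1)"
  moreover have "R (int j) = 1 + fps_X * R (int j) * (R (int (j - 1)) + R (int (j + 1)))"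
    if "j \<ge> 1" for j
    using rec[of "int j"] that by (simp add: of_nat_diff add.commute)
  ultimately have "S = (\<lambda>j. R (int j))"
    using dual by (intro dual_rel_system_unique) auto
  then show "S j = R (int j)" by simp
qed

end
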